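(* For integers $n\ge1$, $t\ge0$ and $\bm{N}=(t,t,\ldots,t,-nt)\in\mathbb{Z}^{n+1}$, \[ (t+1)^{\binom n2}\;\ge\;K_n(\bm{N})\;\ge\;\prod_{i=1}^{n-1}(it+1). \]
   Context: $K_n(\bm{N})$ is the number of integer vectors $(f_{ij})_{0\le i<j\le n}\in\mathbb{Z}_{\ge0}^{\binom{n+1}{2}}$ with $\sum_{j>i} f_{ij}-\sum_{k<i} f_{ki}=N_i$ for every $i\in\{0,\ldots,n\}$. *)

theory Defs
  imports Main
begin

definition pairs :: "nat \<Rightarrow> (nat \<times> nat) set" where
  "pairs n = {(i, j). i < j \<and> j \<le> n}"

definition flows :: "nat \<Rightarrow> (nat \<Rightarrow> int) \<Rightarrow> (nat \<times> nat \<Rightarrow> nat) set" where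
  "flows n N = {f. (\<forall>p. p \<notin> pairs n \<longrightarrow> f p = 0) \<and>
     (\<forall>i\<le>n. (\<Sum>j\<in>{i<..n}. int (f (i, j))) - (\<Sum>k<i. int (f (k, i))) = N i)}"

definition K :: "nat \<Rightarrow> (nat \<Rightarrow> int) \<Rightarrow> nat" where
  "K n N = card (flows n N)"

end

theory Submission
  imports Defs "HOL-Library.FuncSet" Complex_Main
begin

text \<open>
  Contracting the last edge (m, m+1) of the complete acyclic graph on {0..m+1} turns a flow f
  into a flow g on {0..m} whose demand at the merged vertex m is N m + N (m+1); conversely,
  when N m \<ge> 0, f is recovered from g and the amounts s i \<in> {0..g(i,m)} that each edge (i,m)
  delivers to m rather than to m+1, the flow on (m,m+1) being forced by balance at m. Hence
  K (m+1) N = \<Sum>g. \<Prod>i<m. (g(i,m) + 1). For N = (t,...,t,-nt) the contracted demand has the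
  same shape, and the inflows g(i,m) into the sink sum to m t, so the product lies between
  m t + 1 and (t+1)^m (the latter by AM-GM).
\<close>

lemma flows_outside_pairs:
  "f \<in> flows n N \<Longrightarrow> \<not> (i < j \<and> j \<le> n) \<Longrightarrow> f (i, j) = 0"
  by (auto simp: flows_def pairs_def)

lemma flows_balance:
  "f \<in> flows n N \<Longrightarrow> i \<le> n \<Longrightarrow>
     (\<Sum>j\<in>{i<..n}. int (f (i, j))) - (\<Sum>k<i. int (f (k, i))) = N i"
  by (auto simp: flows_def)

lemma flowsI:
  assumes "\<And>i j. \<not> (i < j \<and> j \<le> n) \<Longrightarrow> f (i, j) = 0"
    and "\<And>i. i \<le> n \<Longrightarrow> (\<Sum>j\<in>{i<..n}. int (f (i, j))) - (\<Sum>k<i. int (f (k, i))) = N i"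
  shows "f \<in> flows n N"
  using assms by (auto simp: flows_def pairs_def)

lemma flows_0: "N 0 = 0 \<Longrightarrow> flows 0 N = {\<lambda>_. 0}"
  by (auto intro!: flowsI simp: fun_eq_iff) (metis flows_outside_pairs le_zero_eq not_less_zero)

lemma greaterThanAtMost_Suc_insert:
  "i < m \<Longrightarrow> {i<..Suc m} = insert (Suc m) (insert m {i<..<m})" for i m :: nat
  by auto

lemma greaterThanAtMost_Suc_self: "{m<..Suc m} = {Suc m}" for m :: nat
  by auto

lemma greaterThanAtMost_insert: "i < m \<Longrightarrow> {i<..m} = insert m {i<..<m}" for i m :: nat
  by auto

subsection \<open>Contracting the last edge\<close>

definition contract_demand :: "nat \<Rightarrow> (nat \<Rightarrow> int) \<Rightarrow> nat \<Rightarrow> int" where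
  "contract_demand m N = (\<lambda>i. if i < m then N i else N m + N (Suc m))"

definition contract_flow :: "nat \<Rightarrow> (nat \<times> nat \<Rightarrow> nat) \<Rightarrow> nat \<times> nat \<Rightarrow> nat" where
  "contract_flow m f = (\<lambda>(i, j).
     if j < m then f (i, j) else if j = m \<and> i < m then f (i, m) + f (i, Suc m) else 0)"

definition inflow_split :: "nat \<Rightarrow> (nat \<times> nat \<Rightarrow> nat) \<Rightarrow> nat \<Rightarrow> nat" where
  "inflow_split m f = restrict (\<lambda>i. f (i, m)) {..<m}"

definition uncontract_flow ::
    "nat \<Rightarrow> (nat \<Rightarrow> int) \<Rightarrow> (nat \<times> nat \<Rightarrow> nat) \<Rightarrow> (nat \<Rightarrow> nat) \<Rightarrow> nat \<times> nat \<Rightarrow> nat" where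
  "uncontract_flow m N g s = (\<lambda>(i, j).
     if j < m then g (i, j)
     else if j = m then (if i < m then s i else 0)
     else if j = Suc m then
       (if i < m then g (i, m) - s i else if i = m then nat (N m + (\<Sum>k<m. int (s k))) else 0)
     else 0)"

abbreviation split_choices :: "nat \<Rightarrow> (nat \<times> nat \<Rightarrow> nat) \<Rightarrow> (nat \<Rightarrow> nat) set" where
  "split_choices m g \<equiv> PiE {..<m} (\<lambda>i. {0..g (i, m)})"

lemma contract_flow_in_flows:
  assumes f: "f \<in> flows (Suc m) N"
  shows "contract_flow m f \<in> flows m (contract_demand m N)"
proof (rule flowsI)
  let ?g = "contract_flow m f"
  fix i j assume "\<not> (i < j \<and> j \<le> m)"
  then show "?g (i, j) = 0"
    using flows_outside_pairs[OF f, of i j] by (auto simp: contract_flow_def)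
next
  let ?g = "contract_flow m f"
  fix i assume "i \<le> m"
  then consider "i < m" | "i = m" by linarith
  then show "(\<Sum>j\<in>{i<..m}. int (?g (i, j))) - (\<Sum>k<i. int (?g (k, i))) = contract_demand m N i"
  proof cases
    case 1
    have "(\<Sum>j\<in>{i<..m}. int (?g (i, j)))
        = (\<Sum>j\<in>{i<..<m}. int (f (i, j))) + int (f (i, m)) + int (f (i, Suc m))"
      using 1 by (simp add: greaterThanAtMost_insert contract_flow_def)
    also have "\<dots> = (\<Sum>j\<in>{i<..Suc m}. int (f (i, j)))"
      using 1 by (simp add: greaterThanAtMost_Suc_insert)
    finally have "(\<Sum>j\<in>{i<..m}. int (?g (i, j))) = (\<Sum>j\<in>{i<..Suc m}. int (f (i, j)))" .
    moreover have "(\<Sum>k<i. int (?g (k, i))) = (\<Sum>k<i. int (f (k, i)))"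
      using 1 by (intro sum.cong) (auto simp: contract_flow_def)
    ultimately show ?thesis
      using flows_balance[OF f, of i] 1 by (simp add: contract_demand_def)
  next
    case 2
    have "int (f (m, Suc m)) - (\<Sum>k<m. int (f (k, m))) = N m"
      using flows_balance[OF f, of m] by (simp add: greaterThanAtMost_Suc_self)
    moreover have "- (\<Sum>k<m. int (f (k, Suc m))) - int (f (m, Suc m)) = N (Suc m)"
      using flows_balance[OF f, of "Suc m"] by simp
    moreover have "(\<Sum>k<m. int (?g (k, m))) = (\<Sum>k<m. int (f (k, m))) + (\<Sum>k<m. int (f (k, Suc m)))"
      by (simp add: contract_flow_def sum.distrib)
    ultimately show ?thesis
      using 2 by (simp add: contract_demand_def)
  qed
qed

lemma inflow_split_in_split_choices:
  "inflow_split m f \<in> split_choices m (contract_flow m f)"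
  by (auto simp: inflow_split_def contract_flow_def)

lemma uncontract_flow_in_flows:
  assumes "N m \<ge> 0" and g: "g \<in> flows m (contract_demand m N)" and s: "s \<in> split_choices m g"
  shows "uncontract_flow m N g s \<in> flows (Suc m) N"
proof -
  let ?f = "uncontract_flow m N g s"
  have s_le: "s i \<le> g (i, m)" if "i < m" for i
    using s that by (simp add: PiE_iff)
  have sum_s_nonneg: "(\<Sum>k<m. int (s k)) \<ge> 0"
    by (simp add: sum_nonneg)
  show ?thesis
  proof (rule flowsI)
    fix i j assume "\<not> (i < j \<and> j \<le> Suc m)"
    then show "?f (i, j) = 0"
      using flows_outside_pairs[OF g, of i j] by (auto simp: uncontract_flow_def)
  next
    fix i assume "i \<le> Suc m"
    then consider "i < m" | "i = m" | "i = Suc m" by linarith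
    then show "(\<Sum>j\<in>{i<..Suc m}. int (?f (i, j))) - (\<Sum>k<i. int (?f (k, i))) = N i"
    proof cases
      case 1
      have "(\<Sum>j\<in>{i<..Suc m}. int (?f (i, j)))
          = (\<Sum>j\<in>{i<..<m}. int (g (i, j))) + int (s i) + int (g (i, m) - s i)"
        using 1 by (simp add: greaterThanAtMost_Suc_insert uncontract_flow_def)
      also have "\<dots> = (\<Sum>j\<in>{i<..m}. int (g (i, j)))"
        using 1 s_le[OF 1] by (simp add: greaterThanAtMost_insert of_nat_diff)
      finally have "(\<Sum>j\<in>{i<..Suc m}. int (?f (i, j))) = (\<Sum>j\<in>{i<..m}. int (g (i, j)))" .
      moreover have "(\<Sum>k<i. int (?f (k, i))) = (\<Sum>k<i. int (g (k, i)))"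
        using 1 by (intro sum.cong) (auto simp: uncontract_flow_def)
      ultimately show ?thesis
        using flows_balance[OF g, of i] 1 by (simp add: contract_demand_def)
    next
      case 2
      have "(\<Sum>k<m. int (?f (k, m))) = (\<Sum>k<m. int (s k))"
        by (intro sum.cong) (auto simp: uncontract_flow_def)
      then show ?thesis
        using 2 \<open>N m \<ge> 0\<close> sum_s_nonneg
        by (simp add: greaterThanAtMost_Suc_self uncontract_flow_def)
    next
      case 3
      have "(\<Sum>k<m. int (?f (k, Suc m))) = (\<Sum>k<m. int (g (k, m)) - int (s k))"
        using s_le by (intro sum.cong) (auto simp: uncontract_flow_def of_nat_diff)
      moreover have "- (\<Sum>k<m. int (g (k, m))) = N m + N (Suc m)"
        using flows_balance[OF g, of m] by (simp add: contract_demand_def)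
      moreover have "int (?f (m, Suc m)) = N m + (\<Sum>k<m. int (s k))"
        using \<open>N m \<ge> 0\<close> sum_s_nonneg by (simp add: uncontract_flow_def)
      ultimately show ?thesis
        using 3 by (simp add: sum_subtractf)
    qed
  qed
qed

lemma contract_uncontract_flow:
  assumes g: "g \<in> flows m (contract_demand m N)" and s: "s \<in> split_choices m g"
  shows "contract_flow m (uncontract_flow m N g s) = g"
    and "inflow_split m (uncontract_flow m N g s) = s"
proof -
  have s_le: "s i \<le> g (i, m)" if "i < m" for i
    using s that by (simp add: PiE_iff)
  show "contract_flow m (uncontract_flow m N g s) = g"
  proof (rule ext, clarify)
    fix i j
    show "contract_flow m (uncontract_flow m N g s) (i, j) = g (i, j)"
      using s_le[of i] flows_outside_pairs[OF g, of i j]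
      by (auto simp: contract_flow_def uncontract_flow_def)
  qed
  show "inflow_split m (uncontract_flow m N g s) = s"
    using s by (auto simp: inflow_split_def uncontract_flow_def PiE_def extensional_def)
qed

lemma uncontract_contract_flow:
  assumes f: "f \<in> flows (Suc m) N"
  shows "uncontract_flow m N (contract_flow m f) (inflow_split m f) = f"
proof (rule ext, clarify)
  fix i j
  have "int (f (m, Suc m)) - (\<Sum>k<m. int (f (k, m))) = N m"
    using flows_balance[OF f, of m] by (simp add: greaterThanAtMost_Suc_self)
  then have "f (m, Suc m) = nat (N m + (\<Sum>k<m. int (f (k, m))))"
    by linarith
  then show "uncontract_flow m N (contract_flow m f) (inflow_split m f) (i, j) = f (i, j)"
    using flows_outside_pairs[OF f, of i j]
    by (auto simp: contract_flow_def inflow_split_def uncontract_flow_def)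
qed

lemma bij_betw_uncontract_flow:
  assumes "N m \<ge> 0"
  shows "bij_betw (\<lambda>(g, s). uncontract_flow m N g s)
           (SIGMA g:flows m (contract_demand m N). split_choices m g) (flows (Suc m) N)"
    (is "bij_betw _ ?A _")
proof (rule bij_betwI[where g = "\<lambda>f. (contract_flow m f, inflow_split m f)"])
  show "(\<lambda>(g, s). uncontract_flow m N g s) \<in> ?A \<rightarrow> flows (Suc m) N"
    using uncontract_flow_in_flows[of N m] assms by auto
  show "(\<lambda>f. (contract_flow m f, inflow_split m f)) \<in> flows (Suc m) N \<rightarrow> ?A"
    using contract_flow_in_flows inflow_split_in_split_choices by auto
  show "(\<lambda>f. (contract_flow m f, inflow_split m f)) ((\<lambda>(g, s). uncontract_flow m N g s) x) = x"
    if "x \<in> ?A" for x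
    using that by (cases x) (simp add: contract_uncontract_flow)
  show "(\<lambda>(g, s). uncontract_flow m N g s) ((\<lambda>f. (contract_flow m f, inflow_split m f)) f) = f"
    if "f \<in> flows (Suc m) N" for f
    using that by (simp add: uncontract_contract_flow)
qed

lemma
  assumes "N m \<ge> 0" and fin: "finite (flows m (contract_demand m N))"
  shows finite_flows_Suc: "finite (flows (Suc m) N)"
    and K_Suc_eq_sum_prod: "K (Suc m) N = (\<Sum>g\<in>flows m (contract_demand m N). \<Prod>i<m. g (i, m) + 1)"
proof -
  let ?A = "SIGMA g:flows m (contract_demand m N). split_choices m g"
  have bij: "bij_betw (\<lambda>(g, s). uncontract_flow m N g s) ?A (flows (Suc m) N)"
    using bij_betw_uncontract_flow[of N m] assms(1) by blast
  have "finite ?A"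
    using fin by (simp add: finite_PiE)
  then show "finite (flows (Suc m) N)"
    using bij bij_betw_finite by blast
  have "K (Suc m) N = card ?A"
    unfolding K_def using bij_betw_same_card[OF bij] by simp
  also have "\<dots> = (\<Sum>g\<in>flows m (contract_demand m N). card (split_choices m g))"
    using fin by (simp add: card_SigmaI finite_PiE)
  also have "\<dots> = (\<Sum>g\<in>flows m (contract_demand m N). \<Prod>i<m. g (i, m) + 1)"
    by (simp add: card_PiE)
  finally show "K (Suc m) N = (\<Sum>g\<in>flows m (contract_demand m N). \<Prod>i<m. g (i, m) + 1)" .
qed

subsection \<open>Products with prescribed sum\<close>

lemma Suc_sum_le_prod_plus_one:
  fixes x :: "'a \<Rightarrow> nat"
  assumes "finite A"
  shows "1 + (\<Sum>k\<in>A. x k) \<le> (\<Prod>k\<in>A. x k + 1)"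
  using assms
proof (induction A rule: finite_induct)
  case empty
  then show ?case by simp
next
  case (insert a A)
  have "1 \<le> (\<Prod>k\<in>A. x k + 1)"
    by (simp add: Suc_le_eq prod_pos)
  then have "x a \<le> x a * (\<Prod>k\<in>A. x k + 1)"
    by simp
  moreover have "(\<Sum>k\<in>insert a A. x k) = x a + (\<Sum>k\<in>A. x k)"
    using insert by simp
  ultimately have "1 + (\<Sum>k\<in>insert a A. x k) \<le> x a * (\<Prod>k\<in>A. x k + 1) + (\<Prod>k\<in>A. x k + 1)"
    using insert.IH by linarith
  also have "\<dots> = (\<Prod>k\<in>insert a A. x k + 1)"
    using insert by (simp add: algebra_simps)
  finally show ?case .
qed

text \<open>AM-GM: bound each factor by y \<le> exp (y - 1); the exponents sum to 0.\<close>

lemma prod_le_1_if_sum_eq_card: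
  fixes y :: "'a \<Rightarrow> real"
  assumes nonneg: "\<And>k. k \<in> A \<Longrightarrow> y k \<ge> 0" and sum: "(\<Sum>k\<in>A. y k) = card A"
  shows "(\<Prod>k\<in>A. y k) \<le> 1"
proof (cases "finite A")
  case True
  have "(\<Prod>k\<in>A. y k) \<le> (\<Prod>k\<in>A. exp (y k - 1))"
    using nonneg exp_ge_add_one_self by (intro prod_mono) (smt (verit))
  also have "\<dots> = exp (\<Sum>k\<in>A. y k - 1)"
    using True by (simp add: exp_sum)
  also have "(\<Sum>k\<in>A. y k - 1) = 0"
    using sum by (simp add: sum_subtractf)
  finally show ?thesis
    by simp
qed simp

lemma prod_plus_one_le_power:
  fixes x :: "nat \<Rightarrow> nat"
  assumes "(\<Sum>k<m. x k) = m * t"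
  shows "(\<Prod>k<m. x k + 1) \<le> (t + 1) ^ m"
proof -
  define y where "y k = real (x k + 1) / real (t + 1)" for k
  have sum_plus_one: "(\<Sum>k<m. x k + 1) = (t + 1) * m"
    unfolding sum.distrib using assms by simp
  have "(\<Sum>k<m. y k) = real (\<Sum>k<m. x k + 1) / real (t + 1)"
    by (simp add: y_def sum_divide_distrib)
  also have "\<dots> = card {..<m}"
    using sum_plus_one by (simp add: field_simps)
  finally have "(\<Prod>k<m. y k) \<le> 1"
    by (intro prod_le_1_if_sum_eq_card) (auto simp: y_def)
  moreover have "(\<Prod>k<m. y k) = real (\<Prod>k<m. x k + 1) / real ((t + 1) ^ m)"
    by (simp add: y_def prod_dividef)
  ultimately show ?thesis
    by (simp add: divide_le_eq_1 del: of_nat_prod of_nat_power)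
qed

subsection \<open>The demand vector (t, ..., t, -n t)\<close>

definition sink_demand :: "nat \<Rightarrow> nat \<Rightarrow> nat \<Rightarrow> int" where
  "sink_demand t n = (\<lambda>i. if i < n then int t else - (int n * int t))"

lemma contract_demand_sink_demand: "contract_demand m (sink_demand t (Suc m)) = sink_demand t m"
  by (auto simp: contract_demand_def sink_demand_def fun_eq_iff algebra_simps)

lemma sink_inflow:
  assumes "g \<in> flows m (sink_demand t m)"
  shows "(\<Sum>k<m. g (k, m)) = m * t"
proof -
  have "- (\<Sum>k<m. int (g (k, m))) = - (int m * int t)"
    using flows_balance[OF assms, of m] by (simp add: sink_demand_def)
  then show ?thesis
    by (simp flip: of_nat_sum of_nat_mult)
qed

lemma
  shows finite_flows_sink_demand: "finite (flows n (sink_demand t n))"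
    and K_Suc_sink_demand:
      "K (Suc n) (sink_demand t (Suc n)) = (\<Sum>g\<in>flows n (sink_demand t n). \<Prod>i<n. g (i, n) + 1)"
proof -
  have nonneg: "sink_demand t (Suc m) m \<ge> 0" for m
    by (simp add: sink_demand_def)
  show fin: "finite (flows n (sink_demand t n))" for n
  proof (induction n)
    case 0
    then show ?case by (simp add: flows_0 sink_demand_def)
  next
    case (Suc m)
    then show ?case
      using finite_flows_Suc[of "sink_demand t (Suc m)" m] nonneg by (simp add: contract_demand_sink_demand)
  qed
  show "K (Suc n) (sink_demand t (Suc n)) = (\<Sum>g\<in>flows n (sink_demand t n). \<Prod>i<n. g (i, n) + 1)"
    using K_Suc_eq_sum_prod[of "sink_demand t (Suc n)" n] nonneg fin by (simp add: contract_demand_sink_demand)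
qed

lemma K_sink_demand_le: "K n (sink_demand t n) \<le> (t + 1) ^ (n choose 2)"
proof (induction n)
  case 0
  then show ?case by (simp add: K_def flows_0 sink_demand_def)
next
  case (Suc m)
  have "K (Suc m) (sink_demand t (Suc m)) \<le> (\<Sum>g\<in>flows m (sink_demand t m). (t + 1) ^ m)"
    unfolding K_Suc_sink_demand by (intro sum_mono prod_plus_one_le_power sink_inflow)
  also have "\<dots> = K m (sink_demand t m) * (t + 1) ^ m"
    by (simp add: K_def)
  also have "\<dots> \<le> (t + 1) ^ (m choose 2) * (t + 1) ^ m"
    using Suc.IH by simp
  also have "\<dots> = (t + 1) ^ (Suc m choose 2)"
    by (simp add: numeral_2_eq_2 power_add)
  finally show ?case .
qed

lemma K_sink_demand_ge: "(\<Prod>i=1..n-1. i * t + 1) \<le> K n (sink_demand t n)"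
proof (induction n)
  case 0
  then show ?case by (simp add: K_def flows_0 sink_demand_def)
next
  case (Suc m)
  have "(\<Prod>i=1..Suc m - 1. i * t + 1) = (\<Prod>i=1..m-1. i * t + 1) * (m * t + 1)"
    by (cases m) (simp_all add: prod.cl_ivl_Suc)
  also have "\<dots> \<le> K m (sink_demand t m) * (m * t + 1)"
    using Suc.IH by (rule mult_le_mono1)
  also have "\<dots> = (\<Sum>g\<in>flows m (sink_demand t m). m * t + 1)"
    by (simp add: K_def)
  also have "\<dots> \<le> K (Suc m) (sink_demand t (Suc m))"
    unfolding K_Suc_sink_demand
  proof (intro sum_mono)
    fix g assume "g \<in> flows m (sink_demand t m)"
    then show "m * t + 1 \<le> (\<Prod>i<m. g (i, m) + 1)"
      using Suc_sum_le_prod_plus_one[of "{..<m}" "\<lambda>k. g (k, m)"] sink_inflow by simp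
  qed
  finally show ?case .
qed

theorem proposition2p17:
  fixes n t :: nat
  assumes "n \<ge> 1"
  defines "N \<equiv> (\<lambda>i. if i < n then int t else - (int n * int t))"
  shows "(t + 1) ^ (n choose 2) \<ge> K n N \<and> K n N \<ge> (\<Prod>i=1..n-1. i * t + 1)"
  using K_sink_demand_le K_sink_demand_ge unfolding N_def sink_demand_def by blast

end
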